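(* Let $\rho,\varepsilon,\nu,\omega,\mu:[0,1]\to\mathbb{R}$ be smooth functions with $\rho,\omega>0$, $\nu\ge 0$, $\mu\ge 0$, $\varepsilon(s)>0$ for all $s\in[0,1]$, and $\mu(1)=\mu_s(1)=0$. Let $u\in C^2([0,1])$ with $u(s)\in[-1,1]$ for all $s$. Consider the stationary problem, in the unknowns $q:[0,1]\to\mathbb{R}^2$ and $\sigma:[0,1]\to\mathbb{R}$, $$ \begin{cases} \left(\sigma q_s-H q_{ss}^\perp\right)_s -\left(G q_{ss}+H q_{s}^\perp\right)_{ss}=0 & \text{in }(0,1),\\ |q_s|^2=1 & \text{in }(0,1),\\ q(0)=0,\quad q_s(0)=-e_2,\\ q_{ss}(1)=0,\quad q_{sss}(1)=0,\quad \sigma(1)=0, \end{cases} $$ where $G(s)=\varepsilon(s)+\nu(s)\big(|q_{ss}(s)|^2-\omega^2(s)\big)_+$ and $H(s)=\mu(s)\big(\omega(s)u(s)-q_s(s)\times q_{ss}(s)\big)$. Then this problem admits a unique solution $(q,\sigma)\in C^4([0,1])\times C^1([0,1])$, given for $s\in[0,1]$ by $$ q(s)=\int_0^s\big(\sin(\theta(\xi)),-\cos(\theta(\xi))\big)\,d\xi,\qquad \sigma(s)=\varepsilon(s)\big(\bar\omega(s)u(s)\big)^2, $$ where $$ \theta(\xi)=\int_0^\xi\bar\omega(z)u(z)\,dz,\qquad \bar\omega(s)=\frac{\mu(s)\omega(s)}{\mu(s)+\varepsilon(s)}. $$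
   Context: Notation: $e_2=(0,1)$. For $v\in\mathbb{R}^2$, $v^\perp=\begin{pmatrix}0&1\\-1&0\end{pmatrix}v$. For $v,w\in\mathbb{R}^2$, $v\times w:=v\cdot w^\perp$ (a scalar). $(x)_+=\max\{x,0\}$. Subscripts $s$ denote derivatives with respect to $s$. *)

theory Defs
  imports "HOL-Analysis.Analysis"
begin

definition e2 :: "real \<times> real" where "e2 = (0, 1)"

definition perp :: "real \<times> real \<Rightarrow> real \<times> real" where
  "perp v = (snd v, - fst v)"

definition cross :: "real \<times> real \<Rightarrow> real \<times> real \<Rightarrow> real" where
  "cross v w = v \<bullet> perp w"

definition pos_part :: "real \<Rightarrow> real" where "pos_part x = max x 0"

definition Ck_on01 :: "nat \<Rightarrow> (real \<Rightarrow> 'a::real_normed_vector) \<Rightarrow> (nat \<Rightarrow> real \<Rightarrow> 'a) \<Rightarrow> bool" where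
  "Ck_on01 k f D \<longleftrightarrow> D 0 = f \<and>
     (\<forall>j<k. \<forall>x\<in>{0..1}. (D j has_vector_derivative D (Suc j) x) (at x within {0..1})) \<and>
     continuous_on {0..1} (D k)"

definition smooth01 :: "(real \<Rightarrow> real) \<Rightarrow> bool" where
  "smooth01 f \<longleftrightarrow> (\<exists>D. D 0 = f \<and>
     (\<forall>j. \<forall>x\<in>{0..1}. (D j has_real_derivative D (Suc j) x) (at x within {0..1})))"

definition stationary_solution ::
  "(real \<Rightarrow> real) \<Rightarrow> (real \<Rightarrow> real) \<Rightarrow> (real \<Rightarrow> real) \<Rightarrow> (real \<Rightarrow> real) \<Rightarrow> (real \<Rightarrow> real)
   \<Rightarrow> (real \<Rightarrow> real \<times> real) \<Rightarrow> (real \<Rightarrow> real) \<Rightarrow> bool" where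
  "stationary_solution \<epsilon> \<nu> \<omega> \<mu> u q \<sigma> \<longleftrightarrow>
    (\<exists>Q S. Ck_on01 4 q Q \<and> Ck_on01 1 \<sigma> S \<and>
      (let G = (\<lambda>s. \<epsilon> s + \<nu> s * pos_part ((norm (Q 2 s))\<^sup>2 - (\<omega> s)\<^sup>2));
           H = (\<lambda>s. \<mu> s * (\<omega> s * u s - cross (Q 1 s) (Q 2 s)));
           A = (\<lambda>s. \<sigma> s *\<^sub>R Q 1 s - H s *\<^sub>R perp (Q 2 s));
           B = (\<lambda>s. G s *\<^sub>R Q 2 s + H s *\<^sub>R perp (Q 1 s))
       in \<exists>A' B' B''. \<forall>x\<in>{0<..<1}.
            (A has_vector_derivative A' x) (at x) \<and>
            (B has_vector_derivative B' x) (at x) \<and>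
            (B' has_vector_derivative B'' x) (at x) \<and>
            A' x - B'' x = 0) \<and>
      (\<forall>s\<in>{0<..<1}. (norm (Q 1 s))\<^sup>2 = 1) \<and>
      q 0 = 0 \<and> Q 1 0 = - e2 \<and>
      Q 2 1 = 0 \<and> Q 3 1 = 0 \<and> \<sigma> 1 = 0)"

definition omega_bar :: "(real \<Rightarrow> real) \<Rightarrow> (real \<Rightarrow> real) \<Rightarrow> (real \<Rightarrow> real) \<Rightarrow> real \<Rightarrow> real" where
  "omega_bar \<epsilon> \<omega> \<mu> s = \<mu> s * \<omega> s / (\<mu> s + \<epsilon> s)"

definition theta_expl :: "(real \<Rightarrow> real) \<Rightarrow> (real \<Rightarrow> real) \<Rightarrow> (real \<Rightarrow> real) \<Rightarrow> (real \<Rightarrow> real) \<Rightarrow> real \<Rightarrow> real" where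
  "theta_expl \<epsilon> \<omega> \<mu> u \<xi> = integral {0..\<xi>} (\<lambda>z. omega_bar \<epsilon> \<omega> \<mu> z * u z)"

definition q_expl :: "(real \<Rightarrow> real) \<Rightarrow> (real \<Rightarrow> real) \<Rightarrow> (real \<Rightarrow> real) \<Rightarrow> (real \<Rightarrow> real) \<Rightarrow> real \<Rightarrow> real \<times> real" where
  "q_expl \<epsilon> \<omega> \<mu> u s =
     integral {0..s} (\<lambda>\<xi>. (sin (theta_expl \<epsilon> \<omega> \<mu> u \<xi>), - cos (theta_expl \<epsilon> \<omega> \<mu> u \<xi>)))"

definition sigma_expl :: "(real \<Rightarrow> real) \<Rightarrow> (real \<Rightarrow> real) \<Rightarrow> (real \<Rightarrow> real) \<Rightarrow> (real \<Rightarrow> real) \<Rightarrow> real \<Rightarrow> real" where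
  "sigma_expl \<epsilon> \<omega> \<mu> u s = \<epsilon> s * (omega_bar \<epsilon> \<omega> \<mu> s * u s)\<^sup>2"

end

theory Submission
  imports Defs
begin

(* Write A = \<sigma> q' - H perp q'' and B = G q'' + H perp q', so that the equation reads
   (A - B')' = 0. At s = 1 the boundary conditions q'' = q''' = \<sigma> = 0 and \<mu> = \<mu>' = 0 give
   A = B' = 0, hence B' = A on (0,1). As |q'| = 1, q'' = \<kappa> n with n = -perp q' the unit normal and
   \<kappa> = q' \<times> q''; so A is tangential while B = (G \<kappa> - H) n is normal, whence
   (B \<bullet> n)' = A \<bullet> n + B \<bullet> n' = 0 and B \<bullet> n vanishes. Therefore B = 0 and A = B' = 0, i.e.
   G \<kappa> = H and \<sigma> = H \<kappa>. Pointwise, (\<epsilon> + \<nu> (\<kappa>\<^sup>2 - \<omega>\<^sup>2)\<^sub>+) \<kappa> = \<mu> (\<omega> u - \<kappa>) has the unique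
   root \<kappa> = omega_bar u, because |omega_bar u| < \<omega>. This determines \<sigma>, and q' is the unit vector
   of angle \<theta> = \<integral> \<kappa> fixed by q'(0) = -e2. Conversely, the explicit pair makes A and B vanish
   identically. *)

section \<open>Plane geometry\<close>

lemma perp_perp [simp]: "perp (perp v) = - v"
  by (simp add: perp_def prod_eq_iff)

lemma perp_minus [simp]: "perp (- v) = - perp v"
  by (simp add: perp_def)

lemma perp_diff [simp]: "perp (v - w) = perp v - perp w"
  by (simp add: perp_def)

lemma perp_scaleR [simp]: "perp (c *\<^sub>R v) = c *\<^sub>R perp v"
  by (simp add: perp_def)

lemma inner_perp_self [simp]: "v \<bullet> perp v = 0" "perp v \<bullet> v = 0"
  by (simp_all add: perp_def inner_prod_def)

lemma inner_perp_perp [simp]: "perp v \<bullet> perp w = v \<bullet> w"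
  by (simp add: perp_def inner_prod_def)

lemma bounded_linear_perp: "bounded_linear perp"
  unfolding perp_def by (intro bounded_linear_Pair bounded_linear_minus bounded_linear_fst bounded_linear_snd)

lemmas has_vector_derivative_perp = bounded_linear.has_vector_derivative[OF bounded_linear_perp]

lemma continuous_on_perp [continuous_intros]:
  "continuous_on S f \<Longrightarrow> continuous_on S (\<lambda>x. perp (f x))"
  unfolding perp_def by (intro continuous_intros)

lemma orthogonal_to_unit_eq_cross:
  assumes "t \<bullet> t = 1" "t \<bullet> v = 0"
  shows "v = cross t v *\<^sub>R - perp t"
proof -
  obtain a b c d where t: "t = (a, b)" and v: "v = (c, d)"
    by (cases t, cases v)
  have "a * a + b * b = 1" "a * c + b * d = 0"
    using assms by (auto simp: t v inner_prod_def)
  then have "c = - (b * (a * d - b * c))" "d = a * (a * d - b * c)"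
    by algebra+
  then show ?thesis
    by (simp add: t v cross_def perp_def inner_prod_def algebra_simps)
qed

section \<open>Calculus on an interval\<close>

lemma has_vector_derivative_inner:
  "(f has_vector_derivative f') (at x within S) \<Longrightarrow> (g has_vector_derivative g') (at x within S) \<Longrightarrow>
   ((\<lambda>x. f x \<bullet> g x) has_real_derivative f x \<bullet> g' + f' \<bullet> g x) (at x within S)"
  unfolding has_real_derivative_iff_has_vector_derivative
  by (rule bounded_bilinear.has_vector_derivative[OF bounded_bilinear_inner])

lemma (in bounded_bilinear) has_vector_derivative_vanishing_left:
  assumes f: "(f has_vector_derivative 0) (at x within S)" and "f x = 0"
    and g: "continuous (at x within S) g"
  shows "((\<lambda>y. prod (f y) (g y)) has_vector_derivative 0) (at x within S)"
proof -
  have "((\<lambda>y. (1 / norm (y - x)) *\<^sub>R f y) \<longlongrightarrow> 0) (at x within S)"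
    using f \<open>f x = 0\<close> unfolding has_vector_derivative_def has_derivative_within by simp
  then have "((\<lambda>y. prod ((1 / norm (y - x)) *\<^sub>R f y) (g y)) \<longlongrightarrow> prod 0 (g x)) (at x within S)"
    using g unfolding continuous_within by (rule tendsto)
  then have "((\<lambda>y. (1 / norm (y - x)) *\<^sub>R (prod (f y) (g y))) \<longlongrightarrow> 0) (at x within S)"
    by (simp add: scaleR_left zero_left)
  then show ?thesis
    using \<open>f x = 0\<close> unfolding has_vector_derivative_def has_derivative_within
    by (simp add: bounded_linear_scaleR_left zero_left)
qed

lemma (in bounded_bilinear) has_vector_derivative_vanishing_right:
  assumes "(g has_vector_derivative 0) (at x within S)" "g x = 0" "continuous (at x within S) f"
  shows "((\<lambda>y. prod (f y) (g y)) has_vector_derivative 0) (at x within S)"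
  using bounded_bilinear.has_vector_derivative_vanishing_left[OF flip assms] .

lemma constant_on_Icc_if_interior_derivative_zero:
  fixes f :: "real \<Rightarrow> 'a::banach"
  assumes "continuous_on {a..b} f" "\<And>x. x \<in> {a<..<b} \<Longrightarrow> (f has_vector_derivative 0) (at x)"
    and "x \<in> {a..b}" "y \<in> {a..b}"
  shows "f x = f y"
proof -
  have "f z = f a" if "z \<in> {a..b}" for z
  proof (rule has_derivative_zero_unique_strong_interval[of "{a, b}"])
    fix t assume "t \<in> {a..b} - {a, b}"
    then show "(f has_derivative (\<lambda>h. 0)) (at t within {a..b})"
      using assms(2)[of t] by (simp add: at_within_Icc_at has_vector_derivative_def)
  qed (use assms that in auto)
  then show ?thesis
    using assms(3,4) by metis
qed

lemma has_vector_derivative_at_right_endpoint: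
  fixes f g :: "real \<Rightarrow> 'a::banach"
  assumes "a < b" "continuous_on {a..b} f" "continuous_on {a..b} g"
    and "\<And>x. x \<in> {a<..<b} \<Longrightarrow> (f has_vector_derivative g x) (at x)"
  shows "(f has_vector_derivative g b) (at b within {a..b})"
proof -
  have f_eq: "f s = f a + integral {a..s} g" if "s \<in> {a..b}" for s
  proof -
    have "(g has_integral f s - f a) {a..s}"
      by (rule fundamental_theorem_of_calculus_interior)
        (use assms that in \<open>auto intro: continuous_on_subset\<close>)
    then show ?thesis by (simp add: integral_unique)
  qed
  have D: "((\<lambda>s. f a + integral {a..s} g) has_vector_derivative g b) (at b within {a..b})"
    using integral_has_vector_derivative[OF assms(3)] assms(1)
    by (auto intro!: derivative_eq_intros)
  show ?thesis
    by (rule has_vector_derivative_transform[OF _ f_eq D]) (use assms(1) in simp)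
qed

lemma derivative_eq_if_derivatives_agree_at_endpoint:
  fixes A B A' B' B'' :: "real \<Rightarrow> 'a::banach"
  assumes "a < b" and cont: "continuous_on {a..b} A" "continuous_on {a..b} B"
    and A: "\<And>x. x \<in> {a<..<b} \<Longrightarrow> (A has_vector_derivative A' x) (at x)"
    and B: "\<And>x. x \<in> {a<..<b} \<Longrightarrow> (B has_vector_derivative B' x) (at x)"
    and B': "\<And>x. x \<in> {a<..<b} \<Longrightarrow> (B' has_vector_derivative B'' x) (at x)"
    and eq: "\<And>x. x \<in> {a<..<b} \<Longrightarrow> A' x = B'' x"
    and endpoint: "(B has_vector_derivative A b) (at b within {a..b})"
    and x: "x \<in> {a<..<b}"
  shows "B' x = A x"
proof -
  obtain c where c: "\<And>y. y \<in> {a<..<b} \<Longrightarrow> A y - B' y = c"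
  proof (rule has_vector_derivative_zero_constant[of "{a<..<b}" "\<lambda>y. A y - B' y"])
    fix y assume y: "y \<in> {a<..<b}"
    have "((\<lambda>y. A y - B' y) has_vector_derivative A' y - B'' y) (at y)"
      using A[OF y] B'[OF y] by (rule has_vector_derivative_diff)
    then show "((\<lambda>y. A y - B' y) has_vector_derivative 0) (at y within {a<..<b})"
      using eq[OF y] by (simp add: has_vector_derivative_at_within)
  qed auto
  have endpoint': "(B has_vector_derivative A b - c) (at b within {a..b})"
  proof (rule has_vector_derivative_at_right_endpoint[OF \<open>a < b\<close> cont(2)])
    show "continuous_on {a..b} (\<lambda>y. A y - c)"
      by (intro continuous_intros cont)
    show "(B has_vector_derivative A y - c) (at y)" if "y \<in> {a<..<b}" for y
      using B[OF that] by (simp add: c[OF that, symmetric])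
  qed
  have "at b within {a..b} \<noteq> bot"
    using \<open>a < b\<close> by (simp add: at_within_Icc_at_left)
  then have "A b - c = A b"
    using endpoint' endpoint by (rule vector_derivative_unique_within)
  then have "c = 0"
    by simp
  then show ?thesis
    using c[OF x] by simp
qed

definition c2_on :: "real set \<Rightarrow> (real \<Rightarrow> real) \<Rightarrow> (real \<Rightarrow> real) \<Rightarrow> (real \<Rightarrow> real) \<Rightarrow> bool" where
  "c2_on S f f' f'' \<longleftrightarrow>
     (\<forall>x\<in>S. (f has_real_derivative f' x) (at x within S) \<and> (f' has_real_derivative f'' x) (at x within S)) \<and>
     continuous_on S f''"

lemma c2_on_continuous:
  assumes "c2_on S f f' f''"
  shows "continuous_on S f" "continuous_on S f'" "continuous_on S f''"
  using assms unfolding c2_on_def by (auto intro: DERIV_continuous_on)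

lemma c2_on_add:
  "c2_on S f f' f'' \<Longrightarrow> c2_on S g g' g'' \<Longrightarrow> c2_on S (\<lambda>x. f x + g x) (\<lambda>x. f' x + g' x) (\<lambda>x. f'' x + g'' x)"
  unfolding c2_on_def by (auto intro!: derivative_eq_intros continuous_intros)

lemma c2_on_mult:
  assumes "c2_on S f f' f''" "c2_on S g g' g''"
  shows "c2_on S (\<lambda>x. f x * g x) (\<lambda>x. f' x * g x + f x * g' x)
           (\<lambda>x. f'' x * g x + 2 * f' x * g' x + f x * g'' x)"
  using assms c2_on_continuous[OF assms(1)] c2_on_continuous[OF assms(2)] unfolding c2_on_def
  by (auto intro!: derivative_eq_intros continuous_intros simp: algebra_simps)

lemma c2_on_inverse:
  assumes "c2_on S f f' f''" "\<And>x. x \<in> S \<Longrightarrow> f x \<noteq> 0"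
  shows "c2_on S (\<lambda>x. inverse (f x)) (\<lambda>x. - f' x / (f x)\<^sup>2)
           (\<lambda>x. - f'' x / (f x)\<^sup>2 + 2 * (f' x)\<^sup>2 / (f x) ^ 3)"
  unfolding c2_on_def
proof (intro conjI ballI)
  fix x assume x: "x \<in> S"
  have "(f has_real_derivative f' x) (at x within S)" "(f' has_real_derivative f'' x) (at x within S)"
    using assms(1) x unfolding c2_on_def by auto
  with assms(2)[OF x]
  show "((\<lambda>x. inverse (f x)) has_real_derivative - f' x / (f x)\<^sup>2) (at x within S)"
    and "((\<lambda>x. - f' x / (f x)\<^sup>2) has_real_derivative - f'' x / (f x)\<^sup>2 + 2 * (f' x)\<^sup>2 / (f x) ^ 3)
           (at x within S)"
    by (auto intro!: derivative_eq_intros simp: field_simps power2_eq_square power3_eq_cube)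
next
  show "continuous_on S (\<lambda>x. - f'' x / (f x)\<^sup>2 + 2 * (f' x)\<^sup>2 / (f x) ^ 3)"
    using c2_on_continuous[OF assms(1)] assms(2) by (auto intro!: continuous_intros)
qed

lemma c2_on_if_smooth01:
  assumes "smooth01 f"
  obtains f' f'' where "c2_on {0..1} f f' f''"
proof -
  obtain D where D: "D 0 = f" "\<And>j x. x \<in> {0..1} \<Longrightarrow> (D j has_real_derivative D (Suc j) x) (at x within {0..1})"
    using assms unfolding smooth01_def by blast
  have "continuous_on {0..1} (D 2)"
    using D(2)[of _ 2] by (intro DERIV_continuous_on) auto
  then have "c2_on {0..1} f (D 1) (D 2)"
    using D unfolding c2_on_def by (simp add: numeral_2_eq_2 D(1)[symmetric])
  then show ?thesis using that by blast
qed

lemma c2_on_if_Ck_on01: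
  "Ck_on01 2 (f :: real \<Rightarrow> real) D \<Longrightarrow> c2_on {0..1} f (D 1) (D 2)"
  unfolding Ck_on01_def c2_on_def has_real_derivative_iff_has_vector_derivative
  by (metis One_nat_def lessI numeral_2_eq_2 zero_less_Suc)

lemma omega_bar_sq_less:
  fixes m e w v :: real
  assumes "0 \<le> m" "0 < e" "0 < w" "\<bar>v\<bar> \<le> 1"
  shows "(m * w / (m + e) * v)\<^sup>2 < w\<^sup>2"
proof -
  have "\<bar>m * w / (m + e) * v\<bar> = m * w * \<bar>v\<bar> / (m + e)"
    using assms by (simp add: abs_mult)
  also have "\<dots> \<le> m * w / (m + e)"
    using assms by (intro divide_right_mono mult_left_le) auto
  also have "\<dots> < w"
    using assms by (simp add: field_simps)
  finally show ?thesis
    using \<open>0 < w\<close> abs_le_square_iff[of w "m * w / (m + e) * v"] by simp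
qed

lemma balance_equation_unique:
  fixes e n m w v x :: real
  assumes "0 < e" "0 \<le> n" "0 \<le> m" "0 < w" "\<bar>v\<bar> \<le> 1"
    and balance: "(e + n * pos_part (x\<^sup>2 - w\<^sup>2)) * x = m * (w * v - x)"
  shows "x = m * w / (m + e) * v"
proof (cases "x\<^sup>2 \<le> w\<^sup>2")
  case True
  then have "x * (m + e) = m * w * v"
    using balance by (simp add: pos_part_def algebra_simps)
  then show ?thesis
    using assms by (simp add: field_simps)
next
  case False
  then have p: "pos_part (x\<^sup>2 - w\<^sup>2) = x\<^sup>2 - w\<^sup>2" "0 < x\<^sup>2 - w\<^sup>2"
    by (auto simp: pos_part_def)
  have "w < \<bar>x\<bar>"
    using False \<open>0 < w\<close> abs_le_square_iff[of x w] by auto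
  have "x * (e + m + n * (x\<^sup>2 - w\<^sup>2)) = m * w * v"
    using balance p by (simp add: algebra_simps)
  moreover have "0 \<le> e + m + n * (x\<^sup>2 - w\<^sup>2)"
    using assms p by simp
  ultimately have "\<bar>x\<bar> * (e + m + n * (x\<^sup>2 - w\<^sup>2)) = \<bar>m * w * v\<bar>"
    by (metis abs_mult abs_of_nonneg)
  moreover have "\<bar>m * w * v\<bar> \<le> m * w"
    using assms by (simp add: abs_mult mult_left_le)
  moreover have "\<bar>x\<bar> * (e + m) \<le> \<bar>x\<bar> * (e + m + n * (x\<^sup>2 - w\<^sup>2))"
    using assms p by (simp add: mult_left_mono)
  moreover have "w * (e + m) < \<bar>x\<bar> * (e + m)"
    using \<open>w < \<bar>x\<bar>\<close> assms by (simp add: mult_strict_right_mono)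
  moreover have "m * w < w * (e + m)"
    using assms by (simp add: algebra_simps)
  ultimately show ?thesis
    by linarith
qed

section \<open>The explicit solution\<close>

definition kappa_expl :: "(real \<Rightarrow> real) \<Rightarrow> (real \<Rightarrow> real) \<Rightarrow> (real \<Rightarrow> real) \<Rightarrow> (real \<Rightarrow> real) \<Rightarrow> real \<Rightarrow> real" where
  "kappa_expl \<epsilon> \<omega> \<mu> u s = omega_bar \<epsilon> \<omega> \<mu> s * u s"

definition bending_coeff ::
  "(real \<Rightarrow> real) \<Rightarrow> (real \<Rightarrow> real) \<Rightarrow> (real \<Rightarrow> real) \<Rightarrow> (nat \<Rightarrow> real \<Rightarrow> real \<times> real) \<Rightarrow> real \<Rightarrow> real" where
  "bending_coeff \<epsilon> \<nu> \<omega> Q s = \<epsilon> s + \<nu> s * pos_part ((norm (Q 2 s))\<^sup>2 - (\<omega> s)\<^sup>2)"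

definition curvature_defect ::
  "(real \<Rightarrow> real) \<Rightarrow> (real \<Rightarrow> real) \<Rightarrow> (real \<Rightarrow> real) \<Rightarrow> (nat \<Rightarrow> real \<Rightarrow> real \<times> real) \<Rightarrow> real \<Rightarrow> real" where
  "curvature_defect \<omega> \<mu> u Q s = \<mu> s * (\<omega> s * u s - cross (Q 1 s) (Q 2 s))"

definition tension_part ::
  "(real \<Rightarrow> real) \<Rightarrow> (real \<Rightarrow> real) \<Rightarrow> (real \<Rightarrow> real) \<Rightarrow> (real \<Rightarrow> real) \<Rightarrow> (nat \<Rightarrow> real \<Rightarrow> real \<times> real)
    \<Rightarrow> real \<Rightarrow> real \<times> real" where
  "tension_part \<omega> \<mu> u \<sigma> Q s = \<sigma> s *\<^sub>R Q 1 s - curvature_defect \<omega> \<mu> u Q s *\<^sub>R perp (Q 2 s)"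

definition bending_part ::
  "(real \<Rightarrow> real) \<Rightarrow> (real \<Rightarrow> real) \<Rightarrow> (real \<Rightarrow> real) \<Rightarrow> (real \<Rightarrow> real) \<Rightarrow> (real \<Rightarrow> real)
    \<Rightarrow> (nat \<Rightarrow> real \<Rightarrow> real \<times> real) \<Rightarrow> real \<Rightarrow> real \<times> real" where
  "bending_part \<epsilon> \<nu> \<omega> \<mu> u Q s = bending_coeff \<epsilon> \<nu> \<omega> Q s *\<^sub>R Q 2 s + curvature_defect \<omega> \<mu> u Q s *\<^sub>R perp (Q 1 s)"

lemma stationary_solution_iff:
  "stationary_solution \<epsilon> \<nu> \<omega> \<mu> u q \<sigma> \<longleftrightarrow>
    (\<exists>Q S. Ck_on01 4 q Q \<and> Ck_on01 1 \<sigma> S \<and>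
      (\<exists>A' B' B''. \<forall>x\<in>{0<..<1}.
         (tension_part \<omega> \<mu> u \<sigma> Q has_vector_derivative A' x) (at x) \<and>
         (bending_part \<epsilon> \<nu> \<omega> \<mu> u Q has_vector_derivative B' x) (at x) \<and>
         (B' has_vector_derivative B'' x) (at x) \<and> A' x - B'' x = 0) \<and>
      (\<forall>s\<in>{0<..<1}. (norm (Q 1 s))\<^sup>2 = 1) \<and>
      q 0 = 0 \<and> Q 1 0 = - e2 \<and> Q 2 1 = 0 \<and> Q 3 1 = 0 \<and> \<sigma> 1 = 0)"
  unfolding stationary_solution_def Let_def tension_part_def[abs_def] bending_part_def[abs_def]
    bending_coeff_def curvature_defect_def
  by (rule refl)

locale stationary_problem =
  fixes \<epsilon> \<nu> \<omega> \<mu> u \<epsilon>' k' k'' :: "real \<Rightarrow> real"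
  assumes eps_has_derivative: "\<And>x. x \<in> {0..1} \<Longrightarrow> (\<epsilon> has_real_derivative \<epsilon>' x) (at x within {0..1})"
    and continuous: "continuous_on {0..1} \<epsilon>'" "continuous_on {0..1} \<nu>" "continuous_on {0..1} \<omega>"
      "continuous_on {0..1} \<mu>" "continuous_on {0..1} u"
    and kappa_C2: "c2_on {0..1} (kappa_expl \<epsilon> \<omega> \<mu> u) k' k''"
    and positive: "\<And>s. s \<in> {0..1} \<Longrightarrow> 0 < \<omega> s \<and> 0 \<le> \<nu> s \<and> 0 \<le> \<mu> s \<and> 0 < \<epsilon> s"
    and mu_1: "\<mu> 1 = 0" and mu_has_derivative_1: "(\<mu> has_real_derivative 0) (at 1 within {0..1})"
    and u_bounded: "\<And>s. s \<in> {0..1} \<Longrightarrow> \<bar>u s\<bar> \<le> 1"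
begin

abbreviation "k \<equiv> kappa_expl \<epsilon> \<omega> \<mu> u"
abbreviation "\<theta> \<equiv> theta_expl \<epsilon> \<omega> \<mu> u"

lemma continuous_on_eps: "continuous_on {0..1} \<epsilon>"
  using eps_has_derivative by (rule DERIV_continuous_on)

lemma continuous_on_kappa: "continuous_on {0..1} k"
  using c2_on_continuous[OF kappa_C2] by simp

lemma kappa_1: "k 1 = 0"
  by (simp add: kappa_expl_def omega_bar_def mu_1)

lemma kappa_derivative_1: "k' 1 = 0"
proof -
  have "continuous_on {0..1} (\<lambda>s. \<omega> s / (\<mu> s + \<epsilon> s) * u s)"
    using positive continuous continuous_on_eps
    by (intro continuous_intros) (auto simp: add_nonneg_pos[THEN less_imp_neq, symmetric])
  then have "((\<lambda>s. \<mu> s * (\<omega> s / (\<mu> s + \<epsilon> s) * u s)) has_vector_derivative 0) (at 1 within {0..1})"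
    using mu_has_derivative_1 mu_1
    by (intro bounded_bilinear.has_vector_derivative_vanishing_left[OF bounded_bilinear_mult])
       (auto simp: has_real_derivative_iff_has_vector_derivative continuous_on_eq_continuous_within)
  moreover have "(\<lambda>s. \<mu> s * (\<omega> s / (\<mu> s + \<epsilon> s) * u s)) = k"
    by (simp add: fun_eq_iff kappa_expl_def omega_bar_def)
  ultimately have "(k has_vector_derivative 0) (at 1 within {0..1})"
    by simp
  moreover have "(k has_vector_derivative k' 1) (at 1 within {0..1})"
    using kappa_C2 by (simp add: c2_on_def has_real_derivative_iff_has_vector_derivative)
  moreover have "at (1::real) within {0..1} \<noteq> bot"
    by (simp add: at_within_Icc_at_left)
  ultimately show ?thesis
    using vector_derivative_unique_within by metis
qed

lemma kappa_balance: "s \<in> {0..1} \<Longrightarrow> \<mu> s * (\<omega> s * u s - k s) = \<epsilon> s * k s"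
  using positive[of s] by (simp add: kappa_expl_def omega_bar_def field_simps add_nonneg_pos[THEN less_imp_neq, symmetric])

lemma kappa_sq_less: "s \<in> {0..1} \<Longrightarrow> (k s)\<^sup>2 < (\<omega> s)\<^sup>2"
  using omega_bar_sq_less positive[of s] u_bounded[of s] by (simp add: kappa_expl_def omega_bar_def)

lemma theta_has_derivative: "x \<in> {0..1} \<Longrightarrow> (\<theta> has_real_derivative k x) (at x within {0..1})"
  unfolding theta_expl_def has_real_derivative_iff_has_vector_derivative
  using integral_has_vector_derivative[OF continuous_on_kappa]
  by (simp add: kappa_expl_def[abs_def])

lemma theta_0: "\<theta> 0 = 0"
  by (simp add: theta_expl_def)

definition tangent :: "real \<Rightarrow> real \<times> real" where
  "tangent s = (sin (\<theta> s), - cos (\<theta> s))"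

definition normal :: "real \<Rightarrow> real \<times> real" where
  "normal s = (cos (\<theta> s), sin (\<theta> s))"

lemma normal_eq: "normal s = - perp (tangent s)"
  by (simp add: normal_def tangent_def perp_def)

lemma perp_normal [simp]: "perp (normal s) = tangent s"
  by (simp add: normal_eq)

lemma perp_tangent [simp]: "perp (tangent s) = - normal s"
  by (simp add: normal_eq)

lemma norm_tangent [simp]: "norm (tangent s) = 1"
  by (simp add: tangent_def norm_Pair)

lemma norm_normal [simp]: "norm (normal s) = 1"
  by (simp add: normal_def norm_Pair)

lemma continuous_on_tangent: "continuous_on {0..1} tangent"
  unfolding tangent_def[abs_def]
  by (intro continuous_intros DERIV_continuous_on[OF theta_has_derivative])

lemma continuous_on_normal: "continuous_on {0..1} normal"
  unfolding normal_def[abs_def]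
  by (intro continuous_intros DERIV_continuous_on[OF theta_has_derivative])

lemma tangent_has_derivative:
  assumes "x \<in> {0..1}"
  shows "(tangent has_vector_derivative k x *\<^sub>R normal x) (at x within {0..1})"
  unfolding tangent_def[abs_def] normal_def
  using theta_has_derivative[OF assms]
  by (auto intro!: has_vector_derivative_Pair derivative_eq_intros
      simp flip: has_real_derivative_iff_has_vector_derivative)

lemma normal_has_derivative:
  assumes "x \<in> {0..1}"
  shows "(normal has_vector_derivative - k x *\<^sub>R tangent x) (at x within {0..1})"
  unfolding tangent_def normal_def[abs_def]
  using theta_has_derivative[OF assms]
  by (auto intro!: has_vector_derivative_Pair derivative_eq_intros
      simp flip: has_real_derivative_iff_has_vector_derivative)

lemma kappa_has_derivative:
  assumes "x \<in> {0..1}"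
  shows "(k has_real_derivative k' x) (at x within {0..1})"
    and "(k' has_real_derivative k'' x) (at x within {0..1})"
  using kappa_C2 assms by (auto simp: c2_on_def)

lemma scaleR_normal_has_derivative:
  assumes "x \<in> {0..1}" "(f has_real_derivative f') (at x within {0..1})"
  shows "((\<lambda>s. f s *\<^sub>R normal s) has_vector_derivative f' *\<^sub>R normal x - (f x * k x) *\<^sub>R tangent x)
           (at x within {0..1})"
  using has_vector_derivative_scaleR[OF assms(2) normal_has_derivative[OF assms(1)]]
  by (simp add: algebra_simps)

lemma scaleR_tangent_has_derivative:
  assumes "x \<in> {0..1}" "(f has_real_derivative f') (at x within {0..1})"
  shows "((\<lambda>s. f s *\<^sub>R tangent s) has_vector_derivative f' *\<^sub>R tangent x + (f x * k x) *\<^sub>R normal x)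
           (at x within {0..1})"
  using has_vector_derivative_scaleR[OF assms(2) tangent_has_derivative[OF assms(1)]]
  by (simp add: algebra_simps)

definition q_expl_derivs :: "nat \<Rightarrow> real \<Rightarrow> real \<times> real" where
  "q_expl_derivs j = [q_expl \<epsilon> \<omega> \<mu> u, tangent, \<lambda>s. k s *\<^sub>R normal s,
     \<lambda>s. k' s *\<^sub>R normal s - (k s)\<^sup>2 *\<^sub>R tangent s,
     \<lambda>s. (k'' s - k s ^ 3) *\<^sub>R normal s - (3 * k s * k' s) *\<^sub>R tangent s] ! j"

lemma q_expl_C4: "Ck_on01 4 (q_expl \<epsilon> \<omega> \<mu> u) q_expl_derivs"
  unfolding Ck_on01_def
proof (intro conjI allI impI ballI)
  fix j :: nat and x :: real
  assume "j < 4" and x: "x \<in> {0..1}"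
  then consider "j = 0" | "j = 1" | "j = 2" | "j = 3"
    by linarith
  then show "(q_expl_derivs j has_vector_derivative q_expl_derivs (Suc j) x) (at x within {0..1})"
  proof cases
    case 1
    have "q_expl \<epsilon> \<omega> \<mu> u = (\<lambda>s. integral {0..s} tangent)"
      by (simp add: fun_eq_iff q_expl_def tangent_def[abs_def])
    then show ?thesis
      using integral_has_vector_derivative[OF continuous_on_tangent x] by (simp add: 1 q_expl_derivs_def)
  next
    case 2
    show ?thesis
      using tangent_has_derivative[OF x] by (simp add: 2 q_expl_derivs_def)
  next
    case 3
    show ?thesis
      using scaleR_normal_has_derivative[OF x kappa_has_derivative(1)[OF x]]
      by (simp add: 3 q_expl_derivs_def numeral_eq_Suc power2_eq_square)
  next
    case 4
    have "((\<lambda>s. (k s)\<^sup>2) has_real_derivative 2 * k x * k' x) (at x within {0..1})"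
      using kappa_has_derivative(1)[OF x] by (auto intro!: derivative_eq_intros)
    from has_vector_derivative_diff[OF scaleR_normal_has_derivative[OF x kappa_has_derivative(2)[OF x]]
        scaleR_tangent_has_derivative[OF x this]]
    show ?thesis
      by (simp add: 4 q_expl_derivs_def numeral_eq_Suc prod_eq_iff tangent_def normal_def
          algebra_simps power2_eq_square power3_eq_cube)
  qed
next
  show "continuous_on {0..1} (q_expl_derivs 4)"
    using c2_on_continuous[OF kappa_C2] continuous_on_tangent continuous_on_normal
    by (simp add: q_expl_derivs_def numeral_eq_Suc) (intro continuous_intros)
qed (simp add: q_expl_derivs_def)

definition sigma_expl_derivs :: "nat \<Rightarrow> real \<Rightarrow> real" where
  "sigma_expl_derivs j = [sigma_expl \<epsilon> \<omega> \<mu> u, \<lambda>s. \<epsilon>' s * (k s)\<^sup>2 + 2 * \<epsilon> s * k s * k' s] ! j"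

lemma sigma_expl_C1: "Ck_on01 1 (sigma_expl \<epsilon> \<omega> \<mu> u) sigma_expl_derivs"
  unfolding Ck_on01_def
proof (intro conjI allI impI ballI)
  fix j :: nat and x :: real
  assume "j < 1" and x: "x \<in> {0..1}"
  have "sigma_expl \<epsilon> \<omega> \<mu> u = (\<lambda>s. \<epsilon> s * (k s)\<^sup>2)"
    by (simp add: fun_eq_iff sigma_expl_def kappa_expl_def)
  then show "(sigma_expl_derivs j has_vector_derivative sigma_expl_derivs (Suc j) x) (at x within {0..1})"
    using \<open>j < 1\<close> eps_has_derivative[OF x] kappa_has_derivative(1)[OF x]
    by (auto simp: sigma_expl_derivs_def simp flip: has_real_derivative_iff_has_vector_derivative
        intro!: derivative_eq_intros)
next
  show "continuous_on {0..1} (sigma_expl_derivs 1)"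
    using continuous continuous_on_eps c2_on_continuous[OF kappa_C2]
    by (simp add: sigma_expl_derivs_def) (intro continuous_intros)
qed (simp add: sigma_expl_derivs_def)

lemma curvature_defect_expl:
  "s \<in> {0..1} \<Longrightarrow> curvature_defect \<omega> \<mu> u q_expl_derivs s = \<epsilon> s * k s"
  using kappa_balance[of s]
  by (simp add: curvature_defect_def q_expl_derivs_def cross_def flip: power2_norm_eq_inner)

lemma tension_part_expl:
  "s \<in> {0..1} \<Longrightarrow> tension_part \<omega> \<mu> u (sigma_expl \<epsilon> \<omega> \<mu> u) q_expl_derivs s = 0"
  by (simp add: tension_part_def curvature_defect_expl sigma_expl_def q_expl_derivs_def
      kappa_expl_def power2_eq_square)

lemma bending_part_expl:
  assumes "s \<in> {0..1}"
  shows "bending_part \<epsilon> \<nu> \<omega> \<mu> u q_expl_derivs s = 0"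
proof -
  have "bending_coeff \<epsilon> \<nu> \<omega> q_expl_derivs s = \<epsilon> s"
    using kappa_sq_less[OF assms] by (simp add: bending_coeff_def q_expl_derivs_def pos_part_def)
  then show ?thesis
    using assms by (simp add: bending_part_def curvature_defect_expl q_expl_derivs_def)
qed

lemma stationary_solution_expl: "stationary_solution \<epsilon> \<nu> \<omega> \<mu> u (q_expl \<epsilon> \<omega> \<mu> u) (sigma_expl \<epsilon> \<omega> \<mu> u)"
proof -
  have vanishing: "(f has_vector_derivative 0) (at x)"
    if "\<And>s. s \<in> {0..1} \<Longrightarrow> f s = 0" "x \<in> {0<..<1}" for f :: "real \<Rightarrow> real \<times> real" and x
    by (rule has_vector_derivative_transform_within_open[OF has_vector_derivative_const
          open_greaterThanLessThan \<open>x \<in> {0<..<1}\<close>]) (use that in auto)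
  have "\<exists>A' B' B''. \<forall>x\<in>{0<..<1}.
      (tension_part \<omega> \<mu> u (sigma_expl \<epsilon> \<omega> \<mu> u) q_expl_derivs has_vector_derivative A' x) (at x) \<and>
      (bending_part \<epsilon> \<nu> \<omega> \<mu> u q_expl_derivs has_vector_derivative B' x) (at x) \<and>
      (B' has_vector_derivative B'' x) (at x) \<and> A' x - B'' x = 0"
    using tension_part_expl bending_part_expl
    by (intro exI[of _ "\<lambda>_. 0"]) (auto intro!: vanishing)
  moreover have "q_expl \<epsilon> \<omega> \<mu> u 0 = 0" "q_expl_derivs 1 0 = - e2"
    by (simp_all add: q_expl_def q_expl_derivs_def tangent_def theta_0 e2_def)
  moreover have "q_expl_derivs 2 1 = 0" "q_expl_derivs 3 1 = 0"
    by (simp_all add: q_expl_derivs_def kappa_1 kappa_derivative_1)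
  moreover have "sigma_expl \<epsilon> \<omega> \<mu> u 1 = 0"
    using kappa_1 by (simp add: sigma_expl_def kappa_expl_def)
  moreover have "(norm (q_expl_derivs 1 s))\<^sup>2 = 1" for s
    by (simp add: q_expl_derivs_def)
  ultimately show ?thesis
    unfolding stationary_solution_iff using q_expl_C4 sigma_expl_C1 by blast
qed

end

section \<open>Uniqueness\<close>

locale stationary_problem_solution = stationary_problem +
  fixes q :: "real \<Rightarrow> real \<times> real" and \<sigma> :: "real \<Rightarrow> real"
    and Q :: "nat \<Rightarrow> real \<Rightarrow> real \<times> real" and S :: "nat \<Rightarrow> real \<Rightarrow> real"
    and A' B' B'' :: "real \<Rightarrow> real \<times> real"
  assumes q_C4: "Ck_on01 4 q Q" and sigma_C1: "Ck_on01 1 \<sigma> S"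
    and equation: "\<And>x. x \<in> {0<..<1} \<Longrightarrow>
      (tension_part \<omega> \<mu> u \<sigma> Q has_vector_derivative A' x) (at x) \<and>
      (bending_part \<epsilon> \<nu> \<omega> \<mu> u Q has_vector_derivative B' x) (at x) \<and>
      (B' has_vector_derivative B'' x) (at x) \<and> A' x - B'' x = 0"
    and unit_speed: "\<And>s. s \<in> {0<..<1} \<Longrightarrow> (norm (Q 1 s))\<^sup>2 = 1"
    and q_0: "q 0 = 0" and Q1_0: "Q 1 0 = - e2" and Q2_1: "Q 2 1 = 0" and Q3_1: "Q 3 1 = 0"
    and sigma_1: "\<sigma> 1 = 0"
begin

abbreviation "G \<equiv> bending_coeff \<epsilon> \<nu> \<omega> Q"
abbreviation "H \<equiv> curvature_defect \<omega> \<mu> u Q"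
abbreviation "A \<equiv> tension_part \<omega> \<mu> u \<sigma> Q"
abbreviation "B \<equiv> bending_part \<epsilon> \<nu> \<omega> \<mu> u Q"

definition curvature :: "real \<Rightarrow> real" where
  "curvature s = cross (Q 1 s) (Q 2 s)"

definition q_normal :: "real \<Rightarrow> real \<times> real" where
  "q_normal s = - perp (Q 1 s)"

lemma Q_has_derivative:
  "j < 4 \<Longrightarrow> x \<in> {0..1} \<Longrightarrow> (Q j has_vector_derivative Q (Suc j) x) (at x within {0..1})"
  using q_C4 by (simp add: Ck_on01_def)

lemma continuous_on_Q: "j < 4 \<Longrightarrow> continuous_on {0..1} (Q j)"
  using Q_has_derivative by (blast intro: continuous_on_vector_derivative)

lemma continuous_on_sigma: "continuous_on {0..1} \<sigma>"
  using sigma_C1 unfolding Ck_on01_def by (blast intro: continuous_on_vector_derivative)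

lemma continuous_on_parts:
  shows "continuous_on {0..1} G" "continuous_on {0..1} H"
    and "continuous_on {0..1} A" "continuous_on {0..1} B"
proof -
  note cont = continuous continuous_on_eps continuous_on_Q[of 1] continuous_on_Q[of 2] continuous_on_sigma
  show G: "continuous_on {0..1} G" and H: "continuous_on {0..1} H"
    unfolding bending_coeff_def[abs_def] curvature_defect_def[abs_def] cross_def pos_part_def
    using cont by (auto intro!: continuous_intros)
  show "continuous_on {0..1} A" "continuous_on {0..1} B"
    unfolding tension_part_def[abs_def] bending_part_def[abs_def]
    using cont G H by (auto intro!: continuous_intros)
qed

lemma Q1_has_derivative_interior: "x \<in> {0<..<1} \<Longrightarrow> (Q 1 has_vector_derivative Q 2 x) (at x)"
  using Q_has_derivative[of 1 x] by (simp add: at_within_Icc_at numeral_2_eq_2)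

lemma unit_tangent: "s \<in> {0<..<1} \<Longrightarrow> Q 1 s \<bullet> Q 1 s = 1"
  using unit_speed by (simp add: power2_norm_eq_inner)

lemma tangent_orthogonal:
  assumes s: "s \<in> {0<..<1}"
  shows "Q 1 s \<bullet> Q 2 s = 0"
proof -
  have "((\<lambda>s. Q 1 s \<bullet> Q 1 s) has_real_derivative Q 1 s \<bullet> Q 2 s + Q 2 s \<bullet> Q 1 s) (at s)"
    using has_vector_derivative_inner[OF Q1_has_derivative_interior Q1_has_derivative_interior, OF s s] .
  moreover have "((\<lambda>s. Q 1 s \<bullet> Q 1 s) has_real_derivative 0) (at s)"
    by (rule has_field_derivative_transform_within_open[OF DERIV_const[where k=1] _ s])
      (use unit_tangent in \<open>auto simp del: One_nat_def\<close>)
  ultimately show ?thesis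
    by (auto dest: DERIV_unique simp: inner_commute)
qed

lemma Q2_eq: "s \<in> {0<..<1} \<Longrightarrow> Q 2 s = curvature s *\<^sub>R q_normal s"
  using orthogonal_to_unit_eq_cross[OF unit_tangent tangent_orthogonal]
  by (simp add: curvature_def q_normal_def)

lemma unit_q_normal: "s \<in> {0<..<1} \<Longrightarrow> q_normal s \<bullet> q_normal s = 1"
  using unit_tangent by (simp add: q_normal_def)

lemma tension_part_eq: "s \<in> {0<..<1} \<Longrightarrow> A s = (\<sigma> s - H s * curvature s) *\<^sub>R Q 1 s"
  by (simp add: tension_part_def Q2_eq q_normal_def algebra_simps)

lemma bending_part_eq: "s \<in> {0<..<1} \<Longrightarrow> B s = (G s * curvature s - H s) *\<^sub>R q_normal s"
  by (simp add: bending_part_def Q2_eq q_normal_def algebra_simps)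

lemma curvature_defect_1: "H 1 = 0"
  by (simp add: curvature_defect_def mu_1)

text \<open>The boundary conditions at 1 make \<open>B\<close> vanish to first order there, and \<open>A 1 = 0\<close>.\<close>
lemma bending_part_has_derivative_1: "(B has_vector_derivative A 1) (at 1 within {0..1})"
proof -
  have "continuous_on {0..1} (\<lambda>s. \<omega> s * u s - cross (Q 1 s) (Q 2 s))"
    unfolding cross_def using continuous continuous_on_Q[of 1] continuous_on_Q[of 2]
    by (intro continuous_intros) auto
  then have "((\<lambda>s. \<mu> s * (\<omega> s * u s - cross (Q 1 s) (Q 2 s))) has_vector_derivative 0) (at 1 within {0..1})"
    using mu_has_derivative_1 mu_1
    by (intro bounded_bilinear.has_vector_derivative_vanishing_left[OF bounded_bilinear_mult])
      (auto simp: has_real_derivative_iff_has_vector_derivative continuous_on_eq_continuous_within)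
  then have "(H has_vector_derivative 0) (at 1 within {0..1})"
    by (simp add: curvature_defect_def[abs_def])
  moreover have "continuous_on {0..1} (\<lambda>s. perp (Q 1 s))"
    using continuous_on_Q[of 1] by (intro continuous_intros) simp
  ultimately have H_term: "((\<lambda>s. H s *\<^sub>R perp (Q 1 s)) has_vector_derivative 0) (at 1 within {0..1})"
    using curvature_defect_1
    by (intro bounded_bilinear.has_vector_derivative_vanishing_left[OF bounded_bilinear_scaleR])
      (auto simp: continuous_on_eq_continuous_within)
  have G_term: "((\<lambda>s. G s *\<^sub>R Q 2 s) has_vector_derivative 0) (at 1 within {0..1})"
    using Q_has_derivative[of 2 1] Q2_1 Q3_1 continuous_on_parts(1)
    by (intro bounded_bilinear.has_vector_derivative_vanishing_right[OF bounded_bilinear_scaleR])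
      (auto simp: numeral_eq_Suc continuous_on_eq_continuous_within)
  have "(B has_vector_derivative 0) (at 1 within {0..1})"
    using has_vector_derivative_add[OF G_term H_term] by (simp add: bending_part_def[abs_def])
  then show ?thesis
    by (simp add: tension_part_def sigma_1 curvature_defect_1 Q2_1)
qed

lemma bending_part_derivative:
  assumes "x \<in> {0<..<1}"
  shows "B' x = A x"
proof (rule derivative_eq_if_derivatives_agree_at_endpoint[OF _ continuous_on_parts(3,4) _ _ _ _
      bending_part_has_derivative_1 assms])
  fix y :: real assume "y \<in> {0<..<1}"
  then show "(A has_vector_derivative A' y) (at y)" "(B has_vector_derivative B' y) (at y)"
    and "(B' has_vector_derivative B'' y) (at y)" "A' y = B'' y"
    using equation[of y] by auto
qed simp

lemma norm_Q2: "s \<in> {0<..<1} \<Longrightarrow> (norm (Q 2 s))\<^sup>2 = (curvature s)\<^sup>2"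
  using unit_q_normal[of s] by (simp add: Q2_eq power_mult_distrib power2_norm_eq_inner)

text \<open>\<open>B \<bullet> q_normal\<close> is constant: \<open>B' = A\<close> is tangential while \<open>B\<close> is normal.\<close>
lemma bending_balance:
  assumes s: "s \<in> {0<..<1}"
  shows "G s * curvature s = H s"
proof -
  define f where "f x = B x \<bullet> q_normal x" for x
  have "(f has_vector_derivative 0) (at x)" if x: "x \<in> {0<..<1}" for x
  proof -
    have "(q_normal has_vector_derivative - perp (Q 2 x)) (at x)"
      unfolding q_normal_def[abs_def]
      by (intro has_vector_derivative_minus has_vector_derivative_perp Q1_has_derivative_interior x)
    then have "(f has_real_derivative B x \<bullet> - perp (Q 2 x) + B' x \<bullet> q_normal x) (at x)"
      unfolding f_def[abs_def] using equation[OF x] by (intro has_vector_derivative_inner) auto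
    moreover have "B x \<bullet> - perp (Q 2 x) + B' x \<bullet> q_normal x = 0"
      by (simp add: bending_part_derivative[OF x] tension_part_eq[OF x] bending_part_eq[OF x] Q2_eq[OF x]
          q_normal_def)
    ultimately show ?thesis
      by (simp add: has_real_derivative_iff_has_vector_derivative)
  qed
  moreover have "continuous_on {0..1} f"
    unfolding f_def[abs_def] q_normal_def using continuous_on_parts(4) continuous_on_Q[of 1]
    by (intro continuous_intros) auto
  moreover have "f 1 = 0"
    by (simp add: f_def bending_part_def Q2_1 curvature_defect_1)
  ultimately have "f s = 0"
    using constant_on_Icc_if_interior_derivative_zero[of 0 1 f s 1] s by auto
  then show ?thesis
    using unit_q_normal[OF s] by (simp add: f_def bending_part_eq[OF s])
qed

lemma tension_balance:
  assumes s: "s \<in> {0<..<1}"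
  shows "\<sigma> s = H s * curvature s"
proof -
  have "(B has_vector_derivative 0) (at s)"
    by (rule has_vector_derivative_transform_within_open[OF has_vector_derivative_const
          open_greaterThanLessThan s]) (simp add: bending_part_eq bending_balance)
  moreover have "(B has_vector_derivative A s) (at s)"
    using equation[OF s] bending_part_derivative[OF s] by simp
  ultimately have "A s = 0"
    by (rule vector_derivative_unique_at[symmetric])
  moreover have "Q 1 s \<noteq> 0"
    using unit_tangent[OF s] by auto
  ultimately show ?thesis
    by (simp add: tension_part_eq[OF s])
qed

lemma curvature_eq_kappa:
  assumes s: "s \<in> {0<..<1}"
  shows "curvature s = k s"
proof -
  have "(\<epsilon> s + \<nu> s * pos_part ((curvature s)\<^sup>2 - (\<omega> s)\<^sup>2)) * curvature s = \<mu> s * (\<omega> s * u s - curvature s)"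
    using bending_balance[OF s] norm_Q2[OF s] by (simp add: bending_coeff_def curvature_defect_def curvature_def)
  moreover have "s \<in> {0..1}"
    using s by simp
  ultimately have "curvature s = \<mu> s * \<omega> s / (\<mu> s + \<epsilon> s) * u s"
    using positive u_bounded by (intro balance_equation_unique) auto
  then show ?thesis
    by (simp add: kappa_expl_def omega_bar_def)
qed

lemma sigma_eq_sigma_expl:
  assumes s: "s \<in> {0..1}"
  shows "\<sigma> s = sigma_expl \<epsilon> \<omega> \<mu> u s"
proof -
  have inside: "\<sigma> x - sigma_expl \<epsilon> \<omega> \<mu> u x = 0" if x: "x \<in> {0<..<1}" for x
  proof -
    have "G x = \<epsilon> x"
      using kappa_sq_less[of x] x by (simp add: bending_coeff_def norm_Q2 curvature_eq_kappa pos_part_def)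
    then show ?thesis
      using bending_balance[OF x] tension_balance[OF x] curvature_eq_kappa[OF x]
      by (simp add: sigma_expl_def kappa_expl_def power2_eq_square)
  qed
  have cont: "continuous_on (closure {0<..<1}) (\<lambda>x. \<sigma> x - sigma_expl \<epsilon> \<omega> \<mu> u x)"
    unfolding sigma_expl_def kappa_expl_def[symmetric]
    using continuous_on_sigma continuous_on_eps continuous_on_kappa by (simp, intro continuous_intros)
  have "s \<in> closure {0<..<1}"
    using s by simp
  from continuous_constant_on_closure[OF cont inside this] show ?thesis
    by simp
qed

lemma Q1_eq_tangent:
  assumes s: "s \<in> {0..1}"
  shows "Q 1 s = tangent s"
proof -
  define D where "D x = Q 1 x - tangent x" for x
  have "((\<lambda>x. D x \<bullet> D x) has_vector_derivative 0) (at x)" if x: "x \<in> {0<..<1}" for x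
  proof -
    have "(tangent has_vector_derivative k x *\<^sub>R normal x) (at x)"
      using tangent_has_derivative[of x] x by (simp add: at_within_Icc_at)
    from has_vector_derivative_diff[OF Q1_has_derivative_interior[OF x] this]
    have "(D has_vector_derivative - k x *\<^sub>R perp (D x)) (at x)"
      by (simp add: D_def[abs_def] Q2_eq[OF x] curvature_eq_kappa[OF x] q_normal_def algebra_simps)
    from has_vector_derivative_inner[OF this this] show ?thesis
      by (simp add: has_real_derivative_iff_has_vector_derivative)
  qed
  moreover have "continuous_on {0..1} (\<lambda>x. D x \<bullet> D x)"
    unfolding D_def using continuous_on_Q[of 1] continuous_on_tangent by (intro continuous_intros) auto
  ultimately have "D s \<bullet> D s = D 0 \<bullet> D 0"
    using s by (intro constant_on_Icc_if_interior_derivative_zero) auto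
  also have "D 0 = 0"
    by (simp add: D_def Q1_0 tangent_def theta_0 e2_def del: One_nat_def)
  finally show ?thesis
    by (simp add: D_def)
qed

lemma q_eq_q_expl:
  assumes s: "s \<in> {0..1}"
  shows "q s = q_expl \<epsilon> \<omega> \<mu> u s"
proof -
  have "(q has_vector_derivative Q 1 x) (at x within {0..s})" if "x \<in> {0..s}" for x
    using Q_has_derivative[of 0 x] that s q_C4
    by (auto simp: Ck_on01_def intro: has_vector_derivative_within_subset)
  then have "(Q 1 has_integral q s - q 0) {0..s}"
    using s by (intro fundamental_theorem_of_calculus) auto
  then have "q s = integral {0..s} (Q 1)"
    by (simp add: q_0 integral_unique)
  also have "\<dots> = integral {0..s} tangent"
    using s Q1_eq_tangent by (intro integral_cong) auto
  also have "\<dots> = q_expl \<epsilon> \<omega> \<mu> u s"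
    by (simp add: q_expl_def tangent_def[abs_def])
  finally show ?thesis .
qed

end

context stationary_problem
begin

lemma stationary_solution_unique:
  assumes "stationary_solution \<epsilon> \<nu> \<omega> \<mu> u q \<sigma>" and "s \<in> {0..1}"
  shows "q s = q_expl \<epsilon> \<omega> \<mu> u s \<and> \<sigma> s = sigma_expl \<epsilon> \<omega> \<mu> u s"
proof -
  obtain Q S A' B' B'' where "stationary_problem_solution \<epsilon> \<nu> \<omega> \<mu> u \<epsilon>' k' k'' q \<sigma> Q S A' B' B''"
    using assms(1) stationary_problem_axioms unfolding stationary_solution_iff
      stationary_problem_solution_def stationary_problem_solution_axioms_def
    by blast
  then interpret stationary_problem_solution \<epsilon> \<nu> \<omega> \<mu> u \<epsilon>' k' k'' q \<sigma> Q S A' B' B'' .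
  show ?thesis
    using q_eq_q_expl sigma_eq_sigma_expl assms(2) by blast
qed

end

lemma stationary_problemI:
  assumes "smooth01 \<epsilon>" "smooth01 \<nu>" "smooth01 \<omega>" "smooth01 \<mu>" "Ck_on01 2 u D"
    and positive: "\<forall>s\<in>{0..1}. 0 < \<omega> s \<and> 0 \<le> \<nu> s \<and> 0 \<le> \<mu> s \<and> 0 < \<epsilon> s"
    and "\<mu> 1 = 0" "(\<mu> has_real_derivative 0) (at 1 within {0..1})"
    and "\<forall>s\<in>{0..1}. u s \<in> {-1..1}"
  obtains \<epsilon>' k' k'' where "stationary_problem \<epsilon> \<nu> \<omega> \<mu> u \<epsilon>' k' k''"
proof -
  obtain \<epsilon>' \<epsilon>'' \<nu>' \<nu>'' \<omega>' \<omega>'' \<mu>' \<mu>'' where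
    \<epsilon>: "c2_on {0..1} \<epsilon> \<epsilon>' \<epsilon>''" and \<nu>: "c2_on {0..1} \<nu> \<nu>' \<nu>''" and
    \<omega>: "c2_on {0..1} \<omega> \<omega>' \<omega>''" and \<mu>: "c2_on {0..1} \<mu> \<mu>' \<mu>''"
    using c2_on_if_smooth01 assms(1-4) by metis
  have u: "c2_on {0..1} u (D 1) (D 2)"
    using c2_on_if_Ck_on01[OF assms(5)] .
  have "\<mu> s + \<epsilon> s \<noteq> 0" if "s \<in> {0..1}" for s
    using positive that by (metis add_nonneg_pos less_imp_neq)
  from c2_on_mult[OF c2_on_mult[OF c2_on_mult[OF \<mu> \<omega>] c2_on_inverse[OF c2_on_add[OF \<mu> \<epsilon>] this]] u]
  obtain k' k'' where "c2_on {0..1} (kappa_expl \<epsilon> \<omega> \<mu> u) k' k''"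
    by (fastforce simp: kappa_expl_def[abs_def] omega_bar_def divide_inverse)
  moreover have "(\<epsilon> has_real_derivative \<epsilon>' x) (at x within {0..1})" if "x \<in> {0..1}" for x
    using \<epsilon> that by (simp add: c2_on_def)
  ultimately show ?thesis
    using that[of \<epsilon>' k' k''] assms c2_on_continuous[OF \<epsilon>] c2_on_continuous[OF \<nu>]
      c2_on_continuous[OF \<omega>] c2_on_continuous[OF \<mu>] c2_on_continuous[OF u]
    by (auto simp: stationary_problem_def abs_le_iff)
qed

theorem proposition1:
  fixes \<rho> \<epsilon> \<nu> \<omega> \<mu> u :: "real \<Rightarrow> real"
  assumes "smooth01 \<rho>" and "smooth01 \<epsilon>" and "smooth01 \<nu>" and "smooth01 \<omega>" and "smooth01 \<mu>"
    and "\<forall>s\<in>{0..1}. \<rho> s > 0 \<and> \<omega> s > 0 \<and> \<nu> s \<ge> 0 \<and> \<mu> s \<ge> 0 \<and> \<epsilon> s > 0"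
    and "\<mu> 1 = 0" and "(\<mu> has_real_derivative 0) (at 1 within {0..1})"
    and "\<exists>D. Ck_on01 2 u D"
    and "\<forall>s\<in>{0..1}. u s \<in> {-1..1}"
  shows "stationary_solution \<epsilon> \<nu> \<omega> \<mu> u (q_expl \<epsilon> \<omega> \<mu> u) (sigma_expl \<epsilon> \<omega> \<mu> u) \<and>
         (\<forall>q \<sigma>. stationary_solution \<epsilon> \<nu> \<omega> \<mu> u q \<sigma> \<longrightarrow>
            (\<forall>s\<in>{0..1}. q s = q_expl \<epsilon> \<omega> \<mu> u s \<and> \<sigma> s = sigma_expl \<epsilon> \<omega> \<mu> u s))"
proof -
  obtain D where "Ck_on01 2 u D"
    using assms(9) by blast
  \<comment> \<open>\<open>\<rho>\<close> does not enter the stationary problem.\<close>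
  moreover have "\<forall>s\<in>{0..1}. 0 < \<omega> s \<and> 0 \<le> \<nu> s \<and> 0 \<le> \<mu> s \<and> 0 < \<epsilon> s"
    using assms(6) by blast
  ultimately obtain \<epsilon>' k' k'' where "stationary_problem \<epsilon> \<nu> \<omega> \<mu> u \<epsilon>' k' k''"
    using stationary_problemI assms(2-5,7,8,10) by metis
  then interpret stationary_problem \<epsilon> \<nu> \<omega> \<mu> u \<epsilon>' k' k'' .
  show ?thesis
    using stationary_solution_expl stationary_solution_unique by blast
qed

end
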